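(* Let $(x_n)$ be generated by (HPPA). Let ${\rm a},{\rm E}:\mathbb{N}\to\mathbb{N}$ be monotone functions satisfying (Q1) and (Q4) respectively, and let $\mathcal{E},\mathcal{D}\in\mathbb{N}$ satisfy $\mathcal{E}\geq 1+\sum_{i=0}^{{\rm E}(0)}\|e_i\|$ and $\mathcal{D}\geq\|x_0-p\|$ for some $p\in S$. Define $\xi(k):=\max\{{\rm a}(2(2\mathcal{D}+\mathcal{E})(k+1)-1),\ {\rm E}(2k+1)+1\}$. Then $$\forall k\in\mathbb{N}\ \forall n\geq\xi(k)\ \left(\|x_{n+1}-J_{\beta_n}(x_n)\|\leq\frac{1}{k+1}\right).$$
   Context: $X$ is a real Hilbert space, $\mathsf{A}:X\to 2^X$ a maximal monotone operator with zero set $S=\{x:0\in\mathsf{A}(x)\}$, assumed nonempty. For $\beta>0$, $J_\beta:=(Id+\beta\mathsf{A})^{-1}$ is the resolvent, a single-valued nonexpansive map with fixed point set $S$. Given $(\alpha_n)\subset\,]0,1[$, $(\beta_n)\subset(0,\infty)$, $(e_n)\subset X$, $x_0\in X$, (HPPA) is the sequence $x_{n+1}:=\alpha_n x_0+(1-\alpha_n)(J_{\beta_n}(x_n)+e_n)$. (Q1): $\forall k\,\forall n\geq{\rm a}(k)\ \alpha_n\leq\frac{1}{k+1}$. (Q4): $\forall k\,\forall n\ \sum_{i={\rm E}(k)+1}^{{\rm E}(k)+n}\|e_i\|\leq\frac{1}{k+1}$. Monotone means nondecreasing. *)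

theory Defs
  imports "HOL-Analysis.Analysis"
begin

definition monotone_op :: "('a::real_inner \<Rightarrow> 'a set) \<Rightarrow> bool" where
  "monotone_op A \<longleftrightarrow> (\<forall>x y u v. u \<in> A x \<longrightarrow> v \<in> A y \<longrightarrow> inner (x - y) (u - v) \<ge> 0)"

definition maximal_monotone :: "('a::real_inner \<Rightarrow> 'a set) \<Rightarrow> bool" where
  "maximal_monotone A \<longleftrightarrow> monotone_op A \<and>
     (\<forall>B. monotone_op B \<and> (\<forall>x. A x \<subseteq> B x) \<longrightarrow> B = A)"

text \<open>Resolvent J_beta = (Id + beta A)^{-1}: the unique y with x \<in> y + beta A(y).\<close>
definition resolvent :: "('a::real_inner \<Rightarrow> 'a set) \<Rightarrow> real \<Rightarrow> 'a \<Rightarrow> 'a" where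
  "resolvent A \<beta> x = (THE y. \<exists>u \<in> A y. x = y + \<beta> *\<^sub>R u)"

definition zeros_op :: "('a::real_inner \<Rightarrow> 'a set) \<Rightarrow> 'a set" where
  "zeros_op A = {x. 0 \<in> A x}"

end

theory Submission
  imports Defs
begin

text \<open>
  Writing J = resolvent A (\<beta> n), the residual x (n+1) - J (x n) equals
  \<alpha> n (x 0 - J (x n)) + (1 - \<alpha> n) e n. Since J is nonexpansive and fixes p, the distance
  of x n to p grows at most by the summed errors, so x 0 - J (x n) is bounded by 2\<D> + \<E>;
  the rates a and E then make both terms smaller than 1 / (2 (k + 1)).

  As the resolvent is a definite description, its nonexpansiveness rests on Minty's theorem
  that Id + \<beta>A is onto. Given x, the pairs (c, x - \<beta>b) with b \<in> A c form an antimonotone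
  set G. Lift each pair to (\<langle>c, d\<rangle>, c, d) and maximise the concave function
  L - \<parallel>(C + D)/2\<parallel>^2 over the convex hull of the lifts, where it is nonpositive because G is
  antimonotone. The centres (C + D)/2 of a maximising sequence converge to a point y with
  \<langle>y - c, y - d\<rangle> \<le> 0 for all (c, d) \<in> G, and maximality of A turns this into x - y \<in> \<beta> A y.
\<close>

definition lift_pair :: "'a::real_inner \<Rightarrow> 'a \<Rightarrow> real \<times> 'a \<times> 'a" where
  "lift_pair c d = (inner c d, c, d)"

definition coupling :: "real \<times> 'a::real_inner \<times> 'a \<Rightarrow> real \<times> 'a \<times> 'a \<Rightarrow> real" where
  "coupling u v =
     fst u + fst v - inner (fst (snd u)) (snd (snd v)) - inner (fst (snd v)) (snd (snd u))"

definition centre :: "real \<times> 'a::real_inner \<times> 'a \<Rightarrow> 'a" where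
  "centre u = (1/2) *\<^sub>R (fst (snd u) + snd (snd u))"

definition excess :: "real \<times> 'a::real_inner \<times> 'a \<Rightarrow> real" where
  "excess u = fst u - (norm (centre u))\<^sup>2"

lemma coupling_sym: "coupling u v = coupling v u"
  by (simp add: coupling_def)

lemma coupling_convex_comb:
  "coupling u ((1 - t) *\<^sub>R v + t *\<^sub>R w) = (1 - t) * coupling u v + t * coupling u w"
  by (simp add: coupling_def algebra_simps)

lemma coupling_lift_pair: "coupling (lift_pair c d) (lift_pair c' d') = inner (c - c') (d - d')"
  by (simp add: coupling_def lift_pair_def inner_diff_left inner_diff_right inner_commute)

lemma convex_coupling_nonpos: "convex {v. coupling u v \<le> 0}"
  unfolding convex_alt
proof (intro ballI allI impI)
  fix v w and t :: real
  assume "v \<in> {v. coupling u v \<le> 0}" "w \<in> {v. coupling u v \<le> 0}" "0 \<le> t \<and> t \<le> 1"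
  then show "(1 - t) *\<^sub>R v + t *\<^sub>R w \<in> {v. coupling u v \<le> 0}"
    by (simp add: coupling_convex_comb add_nonpos_nonpos mult_nonneg_nonpos)
qed

lemma excess_eq_coupling:
  "excess u = coupling u u / 2 - (norm (fst (snd u) - snd (snd u)))\<^sup>2 / 4"
  by (simp add: excess_def coupling_def centre_def power2_norm_eq_inner inner_diff_left
      inner_diff_right inner_commute algebra_simps) (simp add: field_simps)

lemma excess_convex_comb:
  "excess ((1 - t) *\<^sub>R u + t *\<^sub>R v) =
     (1 - t) * excess u + t * excess v + t * (1 - t) * (norm (centre u - centre v))\<^sup>2"
  by (simp add: excess_def centre_def power2_norm_eq_inner inner_diff_left inner_diff_right
      inner_commute algebra_simps) (simp add: field_simps)

lemma coupling_hull_nonpos: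
  assumes mon: "\<And>c d c' d'. (c, d) \<in> G \<Longrightarrow> (c', d') \<in> G \<Longrightarrow> inner (c - c') (d - d') \<le> 0"
    and u: "u \<in> convex hull (case_prod lift_pair ` G)"
    and v: "v \<in> convex hull (case_prod lift_pair ` G)"
  shows "coupling u v \<le> 0"
proof -
  have lift_le: "convex hull (case_prod lift_pair ` G) \<subseteq> {v. coupling w v \<le> 0}"
    if "w \<in> case_prod lift_pair ` G" for w
    using that mon by (intro hull_minimal convex_coupling_nonpos) (auto simp: coupling_lift_pair)
  have "case_prod lift_pair ` G \<subseteq> {u. coupling v u \<le> 0}"
    using lift_le v by (fastforce simp: coupling_sym)
  then have "convex hull (case_prod lift_pair ` G) \<subseteq> {u. coupling v u \<le> 0}"
    by (intro hull_minimal convex_coupling_nonpos)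
  with u show ?thesis by (auto simp: coupling_sym)
qed

lemma excess_hull_nonpos:
  assumes "\<And>c d c' d'. (c, d) \<in> G \<Longrightarrow> (c', d') \<in> G \<Longrightarrow> inner (c - c') (d - d') \<le> 0"
    and "u \<in> convex hull (case_prod lift_pair ` G)"
  shows "excess u \<le> 0"
  unfolding excess_eq_coupling
  using coupling_hull_nonpos[OF assms assms(2)] zero_le_power2[of "norm (fst (snd u) - snd (snd u))"]
  by linarith

lemma Cauchy_of_sq_dist_bound:
  fixes Y :: "nat \<Rightarrow> 'a::real_normed_vector"
  assumes bound: "\<And>m n. (norm (Y m - Y n))\<^sup>2 \<le> r m + r n" and r: "r \<longlonglongrightarrow> 0"
  shows "Cauchy Y"
  unfolding Cauchy_iff
proof (intro allI impI)
  fix \<epsilon> :: real assume "\<epsilon> > 0"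
  then obtain M where M: "\<And>n. n \<ge> M \<Longrightarrow> \<bar>r n\<bar> < \<epsilon>\<^sup>2 / 2"
    using LIMSEQ_D[OF r, of "\<epsilon>\<^sup>2 / 2"] by auto
  have "norm (Y m - Y n) < \<epsilon>" if "m \<ge> M" "n \<ge> M" for m n
  proof -
    have "(norm (Y m - Y n))\<^sup>2 < \<epsilon>\<^sup>2"
      using bound[of m n] M[OF that(1)] M[OF that(2)] by linarith
    with \<open>\<epsilon> > 0\<close> show ?thesis by (simp add: power2_less_imp_less)
  qed
  then show "\<exists>M. \<forall>m\<ge>M. \<forall>n\<ge>M. norm (Y m - Y n) < \<epsilon>" by blast
qed

lemma const_over_Suc_tendsto_zero: "(\<lambda>n. c / (real n + 1)) \<longlonglongrightarrow> 0"
  using LIMSEQ_Suc[OF lim_const_over_n[of c]] by (simp add: add.commute)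

lemma maximising_centres_Cauchy:
  assumes H: "convex H" and le_s: "\<And>u. u \<in> H \<Longrightarrow> excess u \<le> s"
    and U: "\<And>n. U n \<in> H" "\<And>n. s - 1 / (real n + 1) < excess (U n)"
  shows "Cauchy (\<lambda>n. centre (U n))"
proof (rule Cauchy_of_sq_dist_bound)
  fix m n
  have "(1 - 1/2) *\<^sub>R U m + (1/2) *\<^sub>R U n \<in> H"
    using convexD_alt[OF H U(1)[of m] U(1)[of n], of "1/2"] by simp
  then have "excess ((1 - 1/2) *\<^sub>R U m + (1/2) *\<^sub>R U n) \<le> s" by (rule le_s)
  with U(2)[of m] U(2)[of n]
  show "(norm (centre (U m) - centre (U n)))\<^sup>2 \<le> 2 / (real m + 1) + 2 / (real n + 1)"
    unfolding excess_convex_comb by simp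
next
  show "(\<lambda>n. 2 / (real n + 1)) \<longlonglongrightarrow> 0"
    by (rule const_over_Suc_tendsto_zero)
qed

lemma inner_diff_diff_eq_excess:
  "inner (y - c) (y - d) = excess (lift_pair c d) + (norm (y - centre (lift_pair c d)))\<^sup>2"
  by (simp add: excess_def centre_def lift_pair_def power2_norm_eq_inner inner_diff_left
      inner_diff_right inner_commute algebra_simps)

lemma maximising_centres_limit:
  assumes H: "convex H" and le_s: "\<And>u. u \<in> H \<Longrightarrow> excess u \<le> s"
    and U: "\<And>n. U n \<in> H" "\<And>n. s - 1 / (real n + 1) < excess (U n)"
    and lim: "(\<lambda>n. centre (U n)) \<longlonglongrightarrow> y" and w: "w \<in> H"
  shows "excess w + (norm (y - centre w))\<^sup>2 \<le> s"
proof -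
  define q where "q z = (norm (z - centre w))\<^sup>2" for z
  have damped: "excess w + (1 - t) * q y \<le> s" if t: "0 < t" "t \<le> 1" for t
  proof -
    have "excess w + (1 - t) * q (centre (U n)) \<le> s + 1 / t * (1 / (real n + 1))" for n
    proof -
      define r where "r = 1 / (real n + 1)"
      have "(1 - t) *\<^sub>R U n + t *\<^sub>R w \<in> H"
        using convexD_alt[OF H U(1)[of n] w] t by simp
      then have "excess ((1 - t) *\<^sub>R U n + t *\<^sub>R w) \<le> s" by (rule le_s)
      then have "(1 - t) * excess (U n) + t * (excess w + (1 - t) * q (centre (U n))) \<le> s"
        unfolding excess_convex_comb q_def by (simp add: algebra_simps)
      moreover have "(1 - t) * (s - r) \<le> (1 - t) * excess (U n)"
        using U(2)[of n] t unfolding r_def by (intro mult_left_mono) auto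
      moreover have "(1 - t) * r \<le> r"
        using t unfolding r_def by (intro mult_left_le_one_le) auto
      ultimately have "t * (excess w + (1 - t) * q (centre (U n))) \<le> t * (s + 1 / t * r)"
        using t by (simp add: algebra_simps)
      with t show ?thesis unfolding r_def by simp
    qed
    moreover have "(\<lambda>n. excess w + (1 - t) * q (centre (U n))) \<longlonglongrightarrow> excess w + (1 - t) * q y"
      unfolding q_def by (intro tendsto_intros lim)
    moreover have "(\<lambda>n. s + 1 / t * (1 / (real n + 1))) \<longlonglongrightarrow> s + 1 / t * 0"
      by (intro tendsto_intros const_over_Suc_tendsto_zero)
    ultimately show ?thesis by (simp add: LIMSEQ_le)
  qed
  have "excess w + q y \<le> s + \<epsilon>" if "\<epsilon> > 0" for \<epsilon>
  proof -
    define t where "t = min 1 (\<epsilon> / (q y + 1))"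
    have q0: "q y \<ge> 0" by (simp add: q_def)
    have t: "0 < t" "t \<le> 1" using \<open>\<epsilon> > 0\<close> q0 by (auto simp: t_def)
    have "t * q y \<le> \<epsilon> / (q y + 1) * q y" using q0 by (intro mult_right_mono) (simp_all add: t_def)
    also have "\<dots> \<le> \<epsilon>" using q0 \<open>\<epsilon> > 0\<close> by (simp add: field_simps)
    finally show ?thesis using damped[OF t] by (simp add: algebra_simps)
  qed
  then show ?thesis unfolding q_def by (rule field_le_epsilon)
qed

text \<open>\<open>inner (y - c) (y - d) \<le> 0\<close> says that y lies in the closed ball with diameter [c, d].\<close>

lemma antimonotone_diameter_balls_common_point:
  fixes G :: "('a::{real_inner,complete_space} \<times> 'a) set"
  assumes mon: "\<And>c d c' d'. (c, d) \<in> G \<Longrightarrow> (c', d') \<in> G \<Longrightarrow> inner (c - c') (d - d') \<le> 0"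
  shows "\<exists>y. \<forall>(c, d) \<in> G. inner (y - c) (y - d) \<le> 0"
proof (cases "G = {}")
  case False
  define H where "H = convex hull (case_prod lift_pair ` G)"
  define s where "s = (SUP u\<in>H. excess u)"
  have "H \<noteq> {}" using False hull_subset[of "case_prod lift_pair ` G"] by (auto simp: H_def)
  have nonpos: "excess u \<le> 0" if "u \<in> H" for u
    using excess_hull_nonpos[OF mon] that by (simp add: H_def)
  then have bdd: "bdd_above (excess ` H)" by (meson bdd_aboveI2)
  have le_s: "excess u \<le> s" if "u \<in> H" for u
    unfolding s_def using that bdd by (rule cSUP_upper)
  have "s \<le> 0" unfolding s_def using \<open>H \<noteq> {}\<close> nonpos by (rule cSUP_least)
  have "\<exists>u\<in>H. s - 1 / (real n + 1) < excess u" for n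
    using less_cSUP_iff[OF \<open>H \<noteq> {}\<close> bdd, of "s - 1 / (real n + 1)"] by (simp add: s_def)
  then obtain U where U: "\<And>n. U n \<in> H" "\<And>n. s - 1 / (real n + 1) < excess (U n)" by metis
  have "convex H" by (simp add: H_def)
  from maximising_centres_Cauchy[OF this le_s U] obtain y where y: "(\<lambda>n. centre (U n)) \<longlonglongrightarrow> y"
    using Cauchy_convergent_iff convergent_def by blast
  have "inner (y - c) (y - d) \<le> 0" if "(c, d) \<in> G" for c d
  proof -
    have "lift_pair c d \<in> H" using that by (auto simp: H_def intro: hull_inc)
    from maximising_centres_limit[OF \<open>convex H\<close> le_s U y this] \<open>s \<le> 0\<close>
    show ?thesis by (simp add: inner_diff_diff_eq_excess)
  qed
  then show ?thesis by blast
qed simp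

lemma maximal_monotone_imp_monotone: "maximal_monotone A \<Longrightarrow> monotone_op A"
  by (simp add: maximal_monotone_def)

lemma maximal_monotone_graph_closed:
  assumes max: "maximal_monotone A"
    and rel: "\<And>c b. b \<in> A c \<Longrightarrow> 0 \<le> inner (y - c) (u - b)"
  shows "u \<in> A y"
proof -
  define B where "B w = (if w = y then insert u (A w) else A w)" for w
  have graph_B: "v \<in> B w \<longleftrightarrow> v \<in> A w \<or> (w = y \<and> v = u)" for v w
    by (auto simp: B_def)
  have rel': "0 \<le> inner (c - y) (b - u)" if "b \<in> A c" for c b
    using rel[OF that] by (simp add: inner_diff_left inner_diff_right inner_commute)
  have "monotone_op B"
    unfolding monotone_op_def graph_B
  proof (intro allI impI)
    fix w w' v v'
    assume "v \<in> A w \<or> w = y \<and> v = u" "v' \<in> A w' \<or> w' = y \<and> v' = u"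
    then show "0 \<le> inner (w - w') (v - v')"
      using maximal_monotone_imp_monotone[OF max] rel rel' by (auto simp: monotone_op_def)
  qed
  moreover have "\<forall>w. A w \<subseteq> B w" by (auto simp: B_def)
  ultimately have "B = A" using max by (simp add: maximal_monotone_def)
  then show ?thesis using graph_B by blast
qed

lemma maximal_monotone_resolvent_exists:
  fixes A :: "'a::{real_inner,complete_space} \<Rightarrow> 'a set"
  assumes max: "maximal_monotone A" and \<beta>: "\<beta> > 0"
  shows "\<exists>y. \<exists>u\<in>A y. x = y + \<beta> *\<^sub>R u"
proof -
  define G where "G = {(c, x - \<beta> *\<^sub>R b) | c b. b \<in> A c}"
  have "inner (c - c') (d - d') \<le> 0" if cd: "(c, d) \<in> G" "(c', d') \<in> G" for c d c' d'
  proof -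
    obtain b b' where "b \<in> A c" "b' \<in> A c'" "d = x - \<beta> *\<^sub>R b" "d' = x - \<beta> *\<^sub>R b'"
      using cd by (auto simp: G_def)
    moreover from this have "d - d' = - \<beta> *\<^sub>R (b - b')" by (simp add: algebra_simps)
    then have "inner (c - c') (d - d') = - \<beta> * inner (c - c') (b - b')" by simp
    ultimately show ?thesis using maximal_monotone_imp_monotone[OF max] \<beta>
      by (simp add: monotone_op_def mult_nonneg_nonneg)
  qed
  then obtain y where y: "\<forall>(c, d) \<in> G. inner (y - c) (y - d) \<le> 0"
    using antimonotone_diameter_balls_common_point by blast
  define u where "u = (1 / \<beta>) *\<^sub>R (x - y)"
  have x_eq: "x = y + \<beta> *\<^sub>R u" using \<beta> by (simp add: u_def)
  have "0 \<le> inner (y - c) (u - b)" if "b \<in> A c" for c b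
  proof -
    have "y - (x - \<beta> *\<^sub>R b) = - \<beta> *\<^sub>R (u - b)" by (simp add: x_eq algebra_simps)
    moreover have "inner (y - c) (y - (x - \<beta> *\<^sub>R b)) \<le> 0" using y that by (auto simp: G_def)
    ultimately show ?thesis using \<beta> by (simp add: zero_le_mult_iff)
  qed
  then have "u \<in> A y" by (rule maximal_monotone_graph_closed[OF max])
  with x_eq show ?thesis by blast
qed

lemma resolvent_unique:
  assumes mon: "monotone_op A" and \<beta>: "\<beta> > 0"
    and "u \<in> A y" "x = y + \<beta> *\<^sub>R u" "u' \<in> A y'" "x = y' + \<beta> *\<^sub>R u'"
  shows "y = y'"
proof -
  have "y - y' = - \<beta> *\<^sub>R (u - u')" using assms(4,6) by (simp add: algebra_simps)
  then have "inner (y - y') (y - y') = - \<beta> * inner (y - y') (u - u')" by simp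
  moreover have "0 \<le> inner (y - y') (u - u')" using mon assms(3,5) by (simp add: monotone_op_def)
  ultimately have "(norm (y - y'))\<^sup>2 \<le> 0"
    using \<beta> by (simp add: power2_norm_eq_inner mult_nonneg_nonneg)
  then show ?thesis by simp
qed

lemma resolvent_eqI:
  assumes "monotone_op A" "\<beta> > 0" "u \<in> A y" "x = y + \<beta> *\<^sub>R u"
  shows "resolvent A \<beta> x = y"
  unfolding resolvent_def
proof (rule the_equality)
  show "\<exists>u\<in>A y. x = y + \<beta> *\<^sub>R u" using assms(3,4) by blast
  show "y' = y" if "\<exists>u\<in>A y'. x = y' + \<beta> *\<^sub>R u" for y'
    using that resolvent_unique[OF assms(1,2) _ _ assms(3,4)] by blast
qed

lemma resolvent_inverse:
  fixes A :: "'a::{real_inner,complete_space} \<Rightarrow> 'a set"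
  assumes "maximal_monotone A" "\<beta> > 0"
  shows "\<exists>u\<in>A (resolvent A \<beta> x). x = resolvent A \<beta> x + \<beta> *\<^sub>R u"
proof -
  obtain y u where "u \<in> A y" "x = y + \<beta> *\<^sub>R u"
    using maximal_monotone_resolvent_exists[OF assms] by blast
  moreover from this have "resolvent A \<beta> x = y"
    using resolvent_eqI[OF maximal_monotone_imp_monotone[OF assms(1)] assms(2)] by blast
  ultimately show ?thesis by auto
qed

lemma resolvent_zero_fixed:
  assumes "monotone_op A" "\<beta> > 0" "p \<in> zeros_op A"
  shows "resolvent A \<beta> p = p"
  using assms by (intro resolvent_eqI[where u = 0]) (auto simp: zeros_op_def)

lemma resolvent_nonexpansive:
  fixes A :: "'a::{real_inner,complete_space} \<Rightarrow> 'a set"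
  assumes max: "maximal_monotone A" and \<beta>: "\<beta> > 0"
  shows "norm (resolvent A \<beta> x - resolvent A \<beta> z) \<le> norm (x - z)"
proof -
  obtain u v where u: "u \<in> A (resolvent A \<beta> x)" "x = resolvent A \<beta> x + \<beta> *\<^sub>R u"
    and v: "v \<in> A (resolvent A \<beta> z)" "z = resolvent A \<beta> z + \<beta> *\<^sub>R v"
    using resolvent_inverse[OF max \<beta>] by metis
  define w where "w = resolvent A \<beta> x - resolvent A \<beta> z"
  have xz: "x - z = w + \<beta> *\<^sub>R (u - v)" using u(2) v(2) by (simp add: w_def algebra_simps)
  have "inner (x - z) (x - z) = inner w w + 2 * \<beta> * inner w (u - v) + \<beta>\<^sup>2 * inner (u - v) (u - v)"
    unfolding xz by (simp add: inner_add_left inner_add_right inner_commute power2_eq_square)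
  moreover have "0 \<le> inner w (u - v)"
    using maximal_monotone_imp_monotone[OF max] u(1) v(1) by (simp add: monotone_op_def w_def)
  ultimately have "inner w w \<le> inner (x - z) (x - z)"
    using \<beta> inner_ge_zero[of "u - v"] by (smt (verit) mult_nonneg_nonneg zero_le_power2)
  then show ?thesis by (simp add: w_def norm_le)
qed

lemma norm_convex_comb_le:
  fixes u v :: "'a::real_normed_vector"
  assumes "0 \<le> a" "a \<le> 1"
  shows "norm (a *\<^sub>R u + (1 - a) *\<^sub>R v) \<le> a * norm u + (1 - a) * norm v"
  using assms norm_triangle_ineq[of "a *\<^sub>R u" "(1 - a) *\<^sub>R v"] by simp

lemma sum_lessThan_le_of_tail_bound:
  fixes f :: "nat \<Rightarrow> real"
  assumes tail: "\<And>n. (\<Sum>i = N + 1 .. N + n. f i) \<le> B" and f: "\<And>i. 0 \<le> f i"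
  shows "(\<Sum>i<n. f i) \<le> (\<Sum>i = 0..N. f i) + B"
proof -
  have "(\<Sum>i<n. f i) \<le> (\<Sum>i\<le>N + n. f i)"
    using f by (intro sum_mono2) auto
  also have "\<dots> = (\<Sum>i\<le>N. f i) + (\<Sum>i = N + 1 .. N + n. f i)"
    by (simp add: sum_up_index_split)
  also have "\<dots> \<le> (\<Sum>i = 0..N. f i) + B"
    using tail by (simp add: atLeast0AtMost)
  finally show ?thesis .
qed

lemma le_of_tail_bound:
  fixes f :: "nat \<Rightarrow> real"
  assumes tail: "\<And>n. (\<Sum>i = N + 1 .. N + n. f i) \<le> B" and f: "\<And>i. 0 \<le> f i" and "N < n"
  shows "f n \<le> B"
proof -
  have "f n \<le> (\<Sum>i = N + 1 .. N + (n - N). f i)"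
    using f \<open>N < n\<close> by (intro member_le_sum) auto
  with tail show ?thesis by (meson order_trans)
qed

lemma halpern_dist_bound:
  fixes x e :: "nat \<Rightarrow> 'a::real_normed_vector"
  assumes \<alpha>: "\<And>n. 0 \<le> \<alpha> n \<and> \<alpha> n \<le> 1"
    and step: "\<And>n. x (Suc n) = \<alpha> n *\<^sub>R x 0 + (1 - \<alpha> n) *\<^sub>R (T n (x n) + e n)"
    and quasi: "\<And>n z. norm (T n z - p) \<le> norm (z - p)"
  shows "norm (x n - p) \<le> norm (x 0 - p) + (\<Sum>i<n. norm (e i))"
proof (induction n)
  case (Suc n)
  define r where "r = norm (x 0 - p) + (\<Sum>i<Suc n. norm (e i))"
  have "x (Suc n) - p = \<alpha> n *\<^sub>R (x 0 - p) + (1 - \<alpha> n) *\<^sub>R ((T n (x n) - p) + e n)"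
    by (simp add: step algebra_simps)
  then have "norm (x (Suc n) - p) \<le> \<alpha> n * norm (x 0 - p) + (1 - \<alpha> n) * norm ((T n (x n) - p) + e n)"
    using \<alpha>[of n] by (simp add: norm_convex_comb_le)
  also have "\<dots> \<le> \<alpha> n * r + (1 - \<alpha> n) * r"
  proof (intro add_mono mult_left_mono)
    show "norm ((T n (x n) - p) + e n) \<le> r"
      using Suc.IH quasi[of n "x n"] norm_triangle_ineq[of "T n (x n) - p" "e n"] by (simp add: r_def)
    show "norm (x 0 - p) \<le> r" by (simp add: r_def sum_nonneg)
  qed (use \<alpha> in auto)
  finally show ?case by (simp add: r_def algebra_simps)
qed simp

lemma halpern_anchor_dist_bound:
  fixes x e :: "nat \<Rightarrow> 'a::real_normed_vector"
  assumes \<alpha>: "\<And>n. 0 \<le> \<alpha> n \<and> \<alpha> n \<le> 1"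
    and step: "\<And>n. x (Suc n) = \<alpha> n *\<^sub>R x 0 + (1 - \<alpha> n) *\<^sub>R (T n (x n) + e n)"
    and quasi: "\<And>n z. norm (T n z - p) \<le> norm (z - p)"
  shows "norm (x 0 - T n (x n)) \<le> 2 * norm (x 0 - p) + (\<Sum>i<n. norm (e i))"
  using halpern_dist_bound[OF assms, of n] quasi[of n "x n"]
    norm_triangle_ineq4[of "x 0 - p" "T n (x n) - p"]
  by simp

lemma halpern_residual_bound:
  fixes x e :: "nat \<Rightarrow> 'a::real_normed_vector"
  assumes \<alpha>: "0 \<le> \<alpha> n" "\<alpha> n \<le> 1"
    and step: "x (Suc n) = \<alpha> n *\<^sub>R x 0 + (1 - \<alpha> n) *\<^sub>R (T n (x n) + e n)"
  shows "norm (x (Suc n) - T n (x n)) \<le> \<alpha> n * norm (x 0 - T n (x n)) + norm (e n)"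
proof -
  have "x (Suc n) - T n (x n) = \<alpha> n *\<^sub>R (x 0 - T n (x n)) + (1 - \<alpha> n) *\<^sub>R e n"
    by (simp add: step algebra_simps)
  then have "norm (x (Suc n) - T n (x n)) \<le> \<alpha> n * norm (x 0 - T n (x n)) + (1 - \<alpha> n) * norm (e n)"
    using \<alpha> by (simp add: norm_convex_comb_le)
  also have "\<dots> \<le> \<alpha> n * norm (x 0 - T n (x n)) + norm (e n)"
    using \<alpha> by (simp add: mult_left_le_one_le)
  finally show ?thesis .
qed

theorem mainTheorem8:
  fixes A :: "'a::{real_inner, complete_space} \<Rightarrow> 'a set"
    and \<alpha> \<beta> :: "nat \<Rightarrow> real" and e x :: "nat \<Rightarrow> 'a"
    and a E :: "nat \<Rightarrow> nat" and \<E> \<D> :: nat and p :: 'a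
  assumes maxmon: "maximal_monotone A"
    and alpha: "\<And>n. 0 < \<alpha> n \<and> \<alpha> n < 1"
    and beta: "\<And>n. \<beta> n > 0"
    and HPPA: "\<And>n. x (Suc n) = \<alpha> n *\<^sub>R x 0 + (1 - \<alpha> n) *\<^sub>R (resolvent A (\<beta> n) (x n) + e n)"
    and mono_a: "mono a" and mono_E: "mono E"
    and Q1: "\<And>k n. n \<ge> a k \<Longrightarrow> \<alpha> n \<le> 1 / (real k + 1)"
    and Q4: "\<And>k n. (\<Sum>i = E k + 1 .. E k + n. norm (e i)) \<le> 1 / (real k + 1)"
    and bound_E: "real \<E> \<ge> 1 + (\<Sum>i = 0 .. E 0. norm (e i))"
    and pS: "p \<in> zeros_op A"
    and bound_D: "real \<D> \<ge> norm (x 0 - p)"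
  shows "\<forall>k. \<forall>n \<ge> max (a (2 * (2 * \<D> + \<E>) * (k + 1) - 1)) (E (2 * k + 1) + 1).
           norm (x (Suc n) - resolvent A (\<beta> n) (x n)) \<le> 1 / (real k + 1)"
proof (intro allI impI)
  fix k n
  assume n: "max (a (2 * (2 * \<D> + \<E>) * (k + 1) - 1)) (E (2 * k + 1) + 1) \<le> n"
  define M where "M = 2 * \<D> + \<E>"
  have \<alpha>: "0 \<le> \<alpha> m \<and> \<alpha> m \<le> 1" for m using alpha[of m] by simp
  define T where "T m = resolvent A (\<beta> m)" for m
  have quasi: "norm (T m z - p) \<le> norm (z - p)" for m z
    using resolvent_nonexpansive[OF maxmon beta, of m z p]
      resolvent_zero_fixed[OF maximal_monotone_imp_monotone[OF maxmon] beta pS]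
    by (simp add: T_def)
  have "(\<Sum>i<n. norm (e i)) \<le> real \<E>"
    using sum_lessThan_le_of_tail_bound[OF Q4[of 0] norm_ge_zero, of n] bound_E by simp
  then have anchor: "norm (x 0 - T n (x n)) \<le> M"
    using halpern_anchor_dist_bound[OF \<alpha> HPPA[folded T_def] quasi, of n] bound_D
    by (simp add: M_def)
  have "real M \<ge> 1" using bound_E sum_nonneg[of "{0..E 0}" "\<lambda>i. norm (e i)"] by (simp add: M_def)
  then have "\<alpha> n \<le> 1 / (2 * M * (real k + 1))"
    using Q1[of "2 * M * (k + 1) - 1" n] n by (simp add: M_def of_nat_diff algebra_simps)
  then have "\<alpha> n * norm (x 0 - T n (x n)) \<le> 1 / (2 * M * (real k + 1)) * M"
    using anchor \<alpha>[of n] by (intro mult_mono) auto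
  also have "\<dots> = 1 / (2 * (real k + 1))" using \<open>real M \<ge> 1\<close> by simp
  finally have anchor_term: "\<alpha> n * norm (x 0 - T n (x n)) \<le> 1 / (2 * (real k + 1))" .
  have error_term: "norm (e n) \<le> 1 / (2 * (real k + 1))"
    using le_of_tail_bound[OF Q4[of "2 * k + 1"], of n] n by (simp add: add.commute)
  have "norm (x (Suc n) - T n (x n)) \<le> \<alpha> n * norm (x 0 - T n (x n)) + norm (e n)"
    using halpern_residual_bound[of \<alpha> n x T e] \<alpha>[of n] HPPA[of n] by (simp add: T_def)
  also have "\<dots> \<le> 1 / (2 * (real k + 1)) + 1 / (2 * (real k + 1))"
    using anchor_term error_term by (rule add_mono)
  also have "\<dots> = 1 / (real k + 1)" by (simp add: field_simps)
  finally show "norm (x (Suc n) - resolvent A (\<beta> n) (x n)) \<le> 1 / (real k + 1)"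
    by (simp add: T_def)
qed

end
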